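(* Let $p$ be an odd prime, $n\geq1$, and let $G$ be a finitely generated, virtually free, para-$C_p^{*n}$ group. Let $\mathcal{G}$ be a graph of groups with $\pi_1(\mathcal{G})\cong G$ whose underlying graph is a finite tree with $k$ vertices, whose vertex groups are finite direct products of copies of $C_p$, in which every edge group is a proper subgroup of each of the two vertex groups it joins, and whose vertex groups $V_1,\dots,V_k$ and edge groups $E_1,\dots,E_{k-1}$ satisfy $\frac{|V_1|}{|E_1|}\cdots\frac{|V_{k-1}|}{|E_{k-1}|}\cdot|V_k| = p^n$ (for any enumeration). If $k\geq n$, then $k=n$ and $G\cong C_p^{*n}$.
   Context: $C_p^{*n}$ is the free product of $n$ copies of the cyclic group $C_p$ of order $p$. A group $G$ is para-$C_p^{*n}$ if it is residually nilpotent and $G/\gamma_k(G)\cong C_p^{*n}/\gamma_k(C_p^{*n})$ for all $k\ge1$, where $\gamma_1(G)=G$, $\gamma_k(G)=[G,\gamma_{k-1}(G)]$. A graph of groups over a tree assigns groups to vertices and edges with monomorphisms from each edge group into the adjacent vertex groups; its fundamental group is the iterated amalgamated free product. *)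

theory Defs
  imports "HOL-Algebra.Algebra"
begin

definition comm_subgroup :: "('a, 'b) monoid_scheme \<Rightarrow> 'a set \<Rightarrow> 'a set \<Rightarrow> 'a set"
  where "comm_subgroup G A B =
     generate G {x \<otimes>\<^bsub>G\<^esub> y \<otimes>\<^bsub>G\<^esub> inv\<^bsub>G\<^esub> x \<otimes>\<^bsub>G\<^esub> inv\<^bsub>G\<^esub> y | x y. x \<in> A \<and> y \<in> B}"

text \<open>lcs G 0 = gamma_1(G) = G, lcs G (Suc k) = [G, lcs G k]; so gamma_k(G) = lcs G (k - 1).\<close>
primrec lcs :: "('a, 'b) monoid_scheme \<Rightarrow> nat \<Rightarrow> 'a set" where
  "lcs G 0 = carrier G"
| "lcs G (Suc k) = comm_subgroup G (carrier G) (lcs G k)"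

definition gamma :: "('a, 'b) monoid_scheme \<Rightarrow> nat \<Rightarrow> 'a set"
  where "gamma G k = lcs G (k - 1)"

definition residually_nilpotent :: "('a, 'b) monoid_scheme \<Rightarrow> bool"
  where "residually_nilpotent G \<longleftrightarrow> (\<Inter>k\<in>{1..}. gamma G k) = {\<one>\<^bsub>G\<^esub>}"

text \<open>Elements are reduced words: lists of (i, a) meaning x_i^a with i < n, 0 < a < p,
  consecutive letters from different factors.\<close>

fun cp_push :: "nat \<Rightarrow> nat \<times> nat \<Rightarrow> (nat \<times> nat) list \<Rightarrow> (nat \<times> nat) list" where
  "cp_push p (i, a) [] = [(i, a)]"
| "cp_push p (i, a) ((j, b) # ws) =
     (if i = j then (if (a + b) mod p = 0 then ws else (i, (a + b) mod p) # ws)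
      else (i, a) # (j, b) # ws)"

definition Cp_free_prod :: "nat \<Rightarrow> nat \<Rightarrow> (nat \<times> nat) list monoid" where
  "Cp_free_prod p n =
     \<lparr> carrier = {ws. (\<forall>(i, a) \<in> set ws. i < n \<and> 0 < a \<and> a < p) \<and>
                      (\<forall>j. Suc j < length ws \<longrightarrow> fst (ws ! j) \<noteq> fst (ws ! Suc j))},
       monoid.mult = (\<lambda>xs ys. foldr (cp_push p) xs ys),
       one = [] \<rparr>"

definition para_Cp_free :: "nat \<Rightarrow> nat \<Rightarrow> ('a, 'b) monoid_scheme \<Rightarrow> bool" where
  "para_Cp_free p n G \<longleftrightarrow> residually_nilpotent G \<and>
     (\<forall>k\<ge>1. G Mod (gamma G k) \<cong> (Cp_free_prod p n) Mod (gamma (Cp_free_prod p n) k))"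

definition finitely_generated :: "('a, 'b) monoid_scheme \<Rightarrow> bool" where
  "finitely_generated G \<longleftrightarrow> (\<exists>S. finite S \<and> S \<subseteq> carrier G \<and> generate G S = carrier G)"

definition word_eval :: "('a, 'b) monoid_scheme \<Rightarrow> ('a \<times> bool) list \<Rightarrow> 'a" where
  "word_eval G ws = foldr (\<lambda>(x, b) acc. (if b then x else inv\<^bsub>G\<^esub> x) \<otimes>\<^bsub>G\<^esub> acc) ws \<one>\<^bsub>G\<^esub>"

definition reduced_word :: "('a \<times> bool) list \<Rightarrow> bool" where
  "reduced_word ws \<longleftrightarrow> (\<forall>j. Suc j < length ws \<longrightarrow>
      \<not> (fst (ws ! j) = fst (ws ! Suc j) \<and> snd (ws ! j) \<noteq> snd (ws ! Suc j)))"

definition freely_generates :: "('a, 'b) monoid_scheme \<Rightarrow> 'a set \<Rightarrow> 'a set \<Rightarrow> bool" where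
  "freely_generates G B F \<longleftrightarrow> B \<subseteq> F \<and> generate G B = F \<and>
     (\<forall>ws. ws \<noteq> [] \<and> fst ` set ws \<subseteq> B \<and> reduced_word ws \<longrightarrow> word_eval G ws \<noteq> \<one>\<^bsub>G\<^esub>)"

definition virtually_free :: "('a, 'b) monoid_scheme \<Rightarrow> bool" where
  "virtually_free G \<longleftrightarrow> (\<exists>F B. subgroup F G \<and> finite (rcosets\<^bsub>G\<^esub> F) \<and> freely_generates G B F)"

text \<open>Vertices 0..<k, edges 0..<k-1, edge e joins src e and tgt e. A connected graph with
  k vertices and k - 1 edges is a tree.\<close>
definition tree_graph :: "nat \<Rightarrow> (nat \<Rightarrow> nat) \<Rightarrow> (nat \<Rightarrow> nat) \<Rightarrow> bool" where
  "tree_graph k src tgt \<longleftrightarrow> 1 \<le> k \<and>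
     (\<forall>e < k - 1. src e < k \<and> tgt e < k \<and> src e \<noteq> tgt e) \<and>
     (\<forall>v < k. (0, v) \<in> ({(src e, tgt e) | e. e < k - 1} \<union> {(tgt e, src e) | e. e < k - 1})\<^sup>*)"

definition graph_of_groups ::
  "nat \<Rightarrow> (nat \<Rightarrow> nat) \<Rightarrow> (nat \<Rightarrow> nat) \<Rightarrow> (nat \<Rightarrow> 'b monoid) \<Rightarrow> (nat \<Rightarrow> 'b monoid)
   \<Rightarrow> (nat \<Rightarrow> 'b \<Rightarrow> 'b) \<Rightarrow> (nat \<Rightarrow> 'b \<Rightarrow> 'b) \<Rightarrow> bool" where
  "graph_of_groups k src tgt V E \<alpha> \<beta> \<longleftrightarrow> tree_graph k src tgt \<and>
     (\<forall>v < k. group (V v)) \<and>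
     (\<forall>e < k - 1. group (E e) \<and>
        \<alpha> e \<in> hom (E e) (V (src e)) \<and> inj_on (\<alpha> e) (carrier (E e)) \<and>
        \<beta> e \<in> hom (E e) (V (tgt e)) \<and> inj_on (\<beta> e) (carrier (E e)))"

definition cocone ::
  "nat \<Rightarrow> (nat \<Rightarrow> nat) \<Rightarrow> (nat \<Rightarrow> nat) \<Rightarrow> (nat \<Rightarrow> 'b monoid) \<Rightarrow> (nat \<Rightarrow> 'b monoid)
   \<Rightarrow> (nat \<Rightarrow> 'b \<Rightarrow> 'b) \<Rightarrow> (nat \<Rightarrow> 'b \<Rightarrow> 'b) \<Rightarrow> ('c, 'd) monoid_scheme \<Rightarrow> (nat \<Rightarrow> 'b \<Rightarrow> 'c) \<Rightarrow> bool" where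
  "cocone k src tgt V E \<alpha> \<beta> T \<phi> \<longleftrightarrow>
     (\<forall>v < k. \<phi> v \<in> hom (V v) T) \<and>
     (\<forall>e < k - 1. \<forall>x \<in> carrier (E e). \<phi> (src e) (\<alpha> e x) = \<phi> (tgt e) (\<beta> e x))"

text \<open>G (with maps phi) is the fundamental group of the tree of groups, i.e. the iterated
  amalgamated free product, characterised by its universal property (colimit of the diagram).
  Test groups range over groups carried by nat; since all groups involved are countable this
  is equivalent to the universal property against all groups.\<close>
definition is_fundamental_group ::
  "nat \<Rightarrow> (nat \<Rightarrow> nat) \<Rightarrow> (nat \<Rightarrow> nat) \<Rightarrow> (nat \<Rightarrow> 'b monoid) \<Rightarrow> (nat \<Rightarrow> 'b monoid)
   \<Rightarrow> (nat \<Rightarrow> 'b \<Rightarrow> 'b) \<Rightarrow> (nat \<Rightarrow> 'b \<Rightarrow> 'b) \<Rightarrow> ('a, 'x) monoid_scheme \<Rightarrow> (nat \<Rightarrow> 'b \<Rightarrow> 'a) \<Rightarrow> bool" where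
  "is_fundamental_group k src tgt V E \<alpha> \<beta> G \<phi> \<longleftrightarrow>
     cocone k src tgt V E \<alpha> \<beta> G \<phi> \<and>
     (\<forall>(T :: nat monoid) \<psi>. group T \<and> cocone k src tgt V E \<alpha> \<beta> T \<psi> \<longrightarrow>
        (\<exists>f. f \<in> hom G T \<and> (\<forall>v < k. \<forall>x \<in> carrier (V v). f (\<phi> v x) = \<psi> v x)) \<and>
        (\<forall>f g. f \<in> hom G T \<and> (\<forall>v < k. \<forall>x \<in> carrier (V v). f (\<phi> v x) = \<psi> v x) \<and>
               g \<in> hom G T \<and> (\<forall>v < k. \<forall>x \<in> carrier (V v). g (\<phi> v x) = \<psi> v x) \<longrightarrow>
               (\<forall>y \<in> carrier G. f y = g y)))"

end

theory Submission
  imports Defs "HOL-Library.Countable_Set" "HOL-Computational_Algebra.Primes"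
begin

text \<open>
  Write \<open>|V_v| = p^{a_v}\<close> and \<open>|E_e| = p^{b_e}\<close>. Properness of the edge groups gives
  \<open>b_e < a_v\<close> at both endpoints of every edge, and the hypothesis on the orders says
  \<open>\<Sum>a - \<Sum>b = n\<close>. Removing leaves one at a time shows \<open>\<Sum>a - \<Sum>b \<ge> k\<close> for a tree with \<open>k\<close>
  vertices, with equality only if every \<open>a_v = 1\<close> and every \<open>b_e = 0\<close>. Hence \<open>k \<ge> n\<close> forces
  \<open>k = n\<close>, all vertex groups are cyclic of order \<open>p\<close> and all edge groups are trivial, so \<open>G\<close> is
  the free product of \<open>n\<close> copies of \<open>C_p\<close>.
\<close>

section \<open>The normal form model of \<open>C_p * \<dots> * C_p\<close> is a group\<close>

fun cp_reduced :: "nat \<Rightarrow> nat \<Rightarrow> (nat \<times> nat) list \<Rightarrow> bool" where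
  "cp_reduced p n [] = True"
| "cp_reduced p n [(i, a)] = (i < n \<and> 0 < a \<and> a < p)"
| "cp_reduced p n ((i, a) # (j, b) # ws) =
     (i < n \<and> 0 < a \<and> a < p \<and> i \<noteq> j \<and> cp_reduced p n ((j, b) # ws))"

lemma cp_reduced_iff:
  "cp_reduced p n ws \<longleftrightarrow> (\<forall>(i, a) \<in> set ws. i < n \<and> 0 < a \<and> a < p) \<and>
     (\<forall>j. Suc j < length ws \<longrightarrow> fst (ws ! j) \<noteq> fst (ws ! Suc j))"
proof (induction p n ws rule: cp_reduced.induct)
  case (3 p n i a j b ws)
  have "(\<forall>m. Suc m < length ((i, a) # (j, b) # ws) \<longrightarrow>
            fst (((i, a) # (j, b) # ws) ! m) \<noteq> fst (((i, a) # (j, b) # ws) ! Suc m))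
    \<longleftrightarrow> i \<noteq> j \<and> (\<forall>m. Suc m < length ((j, b) # ws) \<longrightarrow>
            fst (((j, b) # ws) ! m) \<noteq> fst (((j, b) # ws) ! Suc m))"
    by (auto simp: less_Suc_eq_0_disj all_conj_distrib)
  then show ?case using 3 by auto
qed auto

lemma carrier_Cp_free_prod: "carrier (Cp_free_prod p n) = {ws. cp_reduced p n ws}"
  unfolding Cp_free_prod_def using cp_reduced_iff by auto

lemma mult_Cp_free_prod: "x \<otimes>\<^bsub>Cp_free_prod p n\<^esub> y = foldr (cp_push p) x y"
  by (simp add: Cp_free_prod_def)

lemma one_Cp_free_prod: "\<one>\<^bsub>Cp_free_prod p n\<^esub> = []"
  by (simp add: Cp_free_prod_def)

lemma cp_reduced_tl: "cp_reduced p n (x # ws) \<Longrightarrow> cp_reduced p n ws"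
  by (cases x; cases ws) auto

lemma cp_reduced_hd: "cp_reduced p n ((i, a) # ws) \<Longrightarrow> i < n \<and> 0 < a \<and> a < p"
  by (cases ws) auto

text \<open>\<open>cp_cons i c w\<close> prepends the power \<open>x_i^c\<close> (\<open>0 \<le> c < p\<close>) to a word not starting in
  factor \<open>i\<close>. Every reduced word has this shape, and pushing a letter of factor \<open>i\<close> just
  adds exponents modulo \<open>p\<close>; this is the whole arithmetic behind associativity.\<close>
definition cp_cons :: "nat \<Rightarrow> nat \<Rightarrow> (nat \<times> nat) list \<Rightarrow> (nat \<times> nat) list" where
  "cp_cons i c w = (if c = 0 then w else (i, c) # w)"

definition avoids_factor :: "nat \<Rightarrow> (nat \<times> nat) list \<Rightarrow> bool" where
  "avoids_factor i w \<longleftrightarrow> w = [] \<or> fst (hd w) \<noteq> i"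

lemma cp_reduced_split:
  assumes "cp_reduced p n w" "0 < p"
  obtains c w' where "c < p" "w = cp_cons i c w'" "avoids_factor i w'" "cp_reduced p n w'"
proof (cases w)
  case Nil
  then show ?thesis
    using that[of 0 "[]"] assms by (auto simp: cp_cons_def avoids_factor_def)
next
  case (Cons x w')
  obtain j b where x: "x = (j, b)" by force
  have b: "0 < b" "b < p" using assms Cons x cp_reduced_hd by blast+
  show ?thesis
  proof (cases "j = i")
    case True
    have "avoids_factor i w'" using assms Cons x True by (cases w') (auto simp: avoids_factor_def)
    then show ?thesis using that[of b w'] b Cons x True assms cp_reduced_tl
      by (auto simp: cp_cons_def)
  next
    case False
    then show ?thesis using that[of 0 w] b Cons x assms by (auto simp: cp_cons_def avoids_factor_def)
  qed
qed

lemma cp_push_cons: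
  assumes "0 < a" "a < p" "c < p" "avoids_factor i w"
  shows "cp_push p (i, a) (cp_cons i c w) = cp_cons i ((a + c) mod p) w"
proof (cases "c = 0")
  case True
  then show ?thesis using assms
    by (cases w) (auto simp: cp_cons_def avoids_factor_def)
qed (simp add: cp_cons_def)

lemma cp_reduced_cons:
  assumes "cp_reduced p n w" "avoids_factor i w" "i < n" "c < p"
  shows "cp_reduced p n (cp_cons i c w)"
  using assms by (cases w) (auto simp: cp_cons_def avoids_factor_def)

lemma cp_reduced_push:
  assumes "cp_reduced p n w" "i < n" "0 < a" "a < p"
  shows "cp_reduced p n (cp_push p (i, a) w)"
proof -
  have "0 < p" using assms(4) by simp
  then obtain c w' where c: "c < p" "w = cp_cons i c w'" "avoids_factor i w'" "cp_reduced p n w'"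
    by (rule cp_reduced_split[OF assms(1)])
  have "cp_push p (i, a) w = cp_cons i ((a + c) mod p) w'"
    using c assms(3,4) by (simp add: cp_push_cons)
  moreover have "(a + c) mod p < p" using assms(4) by simp
  ultimately show ?thesis using cp_reduced_cons[OF c(4,3) assms(2)] by simp
qed

lemma cp_reduced_foldr:
  assumes "cp_reduced p n ys"
  shows "cp_reduced p n xs \<Longrightarrow> cp_reduced p n (foldr (cp_push p) xs ys)"
proof (induction xs)
  case (Cons x xs)
  obtain i a where x: "x = (i, a)" by force
  have "cp_reduced p n (foldr (cp_push p) xs ys)" using Cons cp_reduced_tl by blast
  then show ?case using cp_reduced_push cp_reduced_hd Cons.prems x by simp
qed (simp add: assms)

lemma cp_push_push:
  assumes "cp_reduced p n w" "0 < a" "a < p" "0 < b" "b < p"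
  shows "cp_push p (i, a) (cp_push p (i, b) w) =
         (if (a + b) mod p = 0 then w else cp_push p (i, (a + b) mod p) w)"
proof -
  have "0 < p" using assms(3) by simp
  then obtain c w' where c: "c < p" "w = cp_cons i c w'" "avoids_factor i w'" "cp_reduced p n w'"
    by (rule cp_reduced_split[OF assms(1)])
  have bc: "(b + c) mod p < p" using assms(3) by simp
  have "cp_push p (i, a) (cp_push p (i, b) w) = cp_cons i ((a + (b + c) mod p) mod p) w'"
    using c assms(2-5) bc by (simp add: cp_push_cons)
  also have "(a + (b + c) mod p) mod p = ((a + b) mod p + c) mod p"
    by (metis add.assoc mod_add_left_eq mod_add_right_eq)
  also have "cp_cons i (((a + b) mod p + c) mod p) w' =
      (if (a + b) mod p = 0 then w else cp_push p (i, (a + b) mod p) w)"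
  proof (cases "(a + b) mod p = 0")
    case False
    then show ?thesis using c assms(3) by (simp add: cp_push_cons)
  qed (use c in simp)
  finally show ?thesis .
qed

lemma cp_push_foldr:
  assumes "cp_reduced p n ys" "cp_reduced p n zs" "0 < a" "a < p"
  shows "foldr (cp_push p) (cp_push p (i, a) ys) zs = cp_push p (i, a) (foldr (cp_push p) ys zs)"
proof (cases ys)
  case (Cons y ys')
  obtain j b where y: "y = (j, b)" by force
  have b: "0 < b" "b < p" using assms(1) Cons y cp_reduced_hd by blast+
  have "cp_reduced p n (foldr (cp_push p) ys' zs)"
    using assms Cons cp_reduced_tl cp_reduced_foldr by blast
  then show ?thesis using cp_push_push[OF _ assms(3,4) b, where i = i] Cons y by auto
qed simp

lemma cp_foldr_assoc:
  assumes "cp_reduced p n xs" "cp_reduced p n ys" "cp_reduced p n zs"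
  shows "foldr (cp_push p) (foldr (cp_push p) xs ys) zs =
         foldr (cp_push p) xs (foldr (cp_push p) ys zs)"
  using assms(1)
proof (induction xs)
  case (Cons x xs)
  obtain i a where x: "x = (i, a)" by force
  have xs: "cp_reduced p n xs" using Cons cp_reduced_tl by blast
  have a: "0 < a" "a < p" using Cons.prems x cp_reduced_hd by blast+
  show ?case
    using cp_push_foldr[OF cp_reduced_foldr[OF assms(2) xs] assms(3) a, of i] Cons.IH[OF xs] x
    by simp
qed simp

text \<open>The letter \<open>(i, p - a)\<close> cancels the reduced word \<open>(i, a) # w\<close> down to \<open>w\<close>; by induction,
  every reduced word has a left inverse.\<close>
lemma cp_left_inverse:
  assumes "cp_reduced p n w"
  shows "\<exists>y. cp_reduced p n y \<and> foldr (cp_push p) y w = []"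
  using assms
proof (induction w)
  case Nil
  then show ?case by (intro exI[of _ "[]"]) simp
next
  case (Cons x w)
  obtain i a where x: "x = (i, a)" by force
  have w: "cp_reduced p n w" using Cons cp_reduced_tl by blast
  have a: "i < n" "0 < a" "a < p" using Cons.prems x cp_reduced_hd by blast+
  obtain y where y: "cp_reduced p n y" "foldr (cp_push p) y w = []"
    using Cons.IH[OF w] by blast
  have inv: "cp_reduced p n [(i, p - a)]" using a by auto
  have "foldr (cp_push p) (foldr (cp_push p) y [(i, p - a)]) (x # w)
      = foldr (cp_push p) y (foldr (cp_push p) [(i, p - a)] (x # w))"
    using cp_foldr_assoc[OF y(1) inv Cons.prems] .
  also have "foldr (cp_push p) [(i, p - a)] (x # w) = w" using a x by simp
  finally show ?case using y cp_reduced_foldr[OF inv y(1)] by auto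
qed

lemma group_Cp_free_prod:
  assumes "1 < p"
  shows "group (Cp_free_prod p n)"
proof (rule groupI)
  fix x assume "x \<in> carrier (Cp_free_prod p n)"
  then show "\<exists>y\<in>carrier (Cp_free_prod p n). y \<otimes>\<^bsub>Cp_free_prod p n\<^esub> x = \<one>\<^bsub>Cp_free_prod p n\<^esub>"
    using cp_left_inverse
    by (auto simp: carrier_Cp_free_prod mult_Cp_free_prod one_Cp_free_prod)
qed (auto simp: carrier_Cp_free_prod mult_Cp_free_prod one_Cp_free_prod
                cp_reduced_foldr cp_foldr_assoc)

section \<open>Homomorphisms out of \<open>C_p * \<dots> * C_p\<close>\<close>

definition cp_eval :: "('c, 'd) monoid_scheme \<Rightarrow> (nat \<Rightarrow> 'c) \<Rightarrow> (nat \<times> nat) list \<Rightarrow> 'c" where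
  "cp_eval T t ws = foldr (\<lambda>(i, a) acc. t i [^]\<^bsub>T\<^esub> a \<otimes>\<^bsub>T\<^esub> acc) ws \<one>\<^bsub>T\<^esub>"

lemma cp_eval_Nil [simp]: "cp_eval T t [] = \<one>\<^bsub>T\<^esub>"
  by (simp add: cp_eval_def)

lemma cp_eval_Cons [simp]: "cp_eval T t ((i, a) # ws) = t i [^]\<^bsub>T\<^esub> a \<otimes>\<^bsub>T\<^esub> cp_eval T t ws"
  by (simp add: cp_eval_def)

lemma (in group) nat_pow_mod_exponent:
  assumes "x \<in> carrier G" "x [^] (p::nat) = \<one>"
  shows "x [^] (m::nat) = x [^] (m mod p)"
proof -
  have "x [^] m = (x [^] p) [^] (m div p) \<otimes> x [^] (m mod p)"
    using assms(1) by (metis mult_div_mod_eq nat_pow_mult nat_pow_pow)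
  then show ?thesis using assms by simp
qed

locale cp_evaluation = group T for T (structure) +
  fixes p n :: nat and t :: "nat \<Rightarrow> 'a"
  assumes gen_closed: "i < n \<Longrightarrow> t i \<in> carrier T"
    and gen_exponent: "i < n \<Longrightarrow> t i [^] p = \<one>"
begin

lemma cp_eval_closed: "cp_reduced p n ws \<Longrightarrow> cp_eval T t ws \<in> carrier T"
proof (induction ws)
  case (Cons x ws)
  obtain i a where x: "x = (i, a)" by force
  have "t i \<in> carrier T" "cp_eval T t ws \<in> carrier T"
    using Cons x cp_reduced_hd cp_reduced_tl gen_closed by blast+
  then show ?case using x by simp
qed simp

lemma cp_eval_push:
  assumes "cp_reduced p n w" "i < n"
  shows "cp_eval T t (cp_push p (i, a) w) = t i [^] a \<otimes> cp_eval T t w"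
proof (cases w)
  case (Cons y w')
  obtain j b where y: "y = (j, b)" by force
  have w': "cp_eval T t w' \<in> carrier T" using assms(1) Cons cp_reduced_tl cp_eval_closed by blast
  have ti: "t i \<in> carrier T" "t i [^] p = \<one>" using assms(2) gen_closed gen_exponent by auto
  have "t i [^] a \<otimes> (t i [^] b \<otimes> cp_eval T t w') = t i [^] ((a + b) mod p) \<otimes> cp_eval T t w'"
    using ti w' by (simp add: m_assoc[symmetric] nat_pow_mult nat_pow_mod_exponent[of _ p "a + b"])
  then show ?thesis using Cons y ti w' by auto
qed simp

lemma cp_eval_mult:
  assumes "cp_reduced p n xs" "cp_reduced p n ys"
  shows "cp_eval T t (foldr (cp_push p) xs ys) = cp_eval T t xs \<otimes> cp_eval T t ys"
  using assms(1)
proof (induction xs)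
  case Nil
  then show ?case using cp_eval_closed[OF assms(2)] by simp
next
  case (Cons x xs)
  obtain i a where x: "x = (i, a)" by force
  have xs: "cp_reduced p n xs" and i: "i < n"
    using Cons.prems x cp_reduced_tl cp_reduced_hd by blast+
  show ?case
    using cp_eval_push[OF cp_reduced_foldr[OF assms(2) xs] i, of a] Cons.IH[OF xs] x
      cp_eval_closed[OF xs] cp_eval_closed[OF assms(2)] gen_closed[OF i]
    by (simp add: m_assoc)
qed

lemma cp_eval_hom: "cp_eval T t \<in> hom (Cp_free_prod p n) T"
  by (rule homI) (auto simp: carrier_Cp_free_prod mult_Cp_free_prod cp_eval_closed cp_eval_mult)

lemma cp_eval_letter: "i < n \<Longrightarrow> cp_eval T t [(i, a)] = t i [^] a"
  using gen_closed by simp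

end

text \<open>Homomorphisms out of \<open>C_p * \<dots> * C_p\<close> are determined by their values on the
  letters \<open>x_i^a\<close>, since every reduced word \<open>(i, a) # w\<close> is the product \<open>[(i, a)] \<cdot> w\<close>.\<close>
lemma Cp_free_prod_hom_ext:
  assumes "f \<in> hom (Cp_free_prod p n) T" "g \<in> hom (Cp_free_prod p n) T"
    and "group T" "1 < p"
    and letters: "\<And>i a. i < n \<Longrightarrow> 0 < a \<Longrightarrow> a < p \<Longrightarrow> f [(i, a)] = g [(i, a)]"
  shows "w \<in> carrier (Cp_free_prod p n) \<Longrightarrow> f w = g w"
proof (induction w)
  case Nil
  have "group (Cp_free_prod p n)" using group_Cp_free_prod[OF assms(4)] .
  then show ?case using hom_one[OF assms(1)] hom_one[OF assms(2)] assms(3)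
    by (simp add: one_Cp_free_prod)
next
  case (Cons x w)
  obtain i a where x: "x = (i, a)" by force
  have w: "w \<in> carrier (Cp_free_prod p n)" and a: "i < n" "0 < a" "a < p"
    using Cons.prems x cp_reduced_tl cp_reduced_hd by (auto simp: carrier_Cp_free_prod)
  have letter: "[(i, a)] \<in> carrier (Cp_free_prod p n)" using a by (simp add: carrier_Cp_free_prod)
  have split: "x # w = [(i, a)] \<otimes>\<^bsub>Cp_free_prod p n\<^esub> w"
    using Cons.prems x by (cases w) (auto simp: mult_Cp_free_prod carrier_Cp_free_prod)
  show ?case
    unfolding split using hom_mult[OF assms(1) letter w] hom_mult[OF assms(2) letter w]
      letters[OF a] Cons.IH[OF w] by simp
qed

section \<open>Groups of prime order as free factors\<close>

text \<open>A chosen non-identity element; in a group of prime order it generates the group.\<close>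
definition prime_gen :: "('a, 'b) monoid_scheme \<Rightarrow> 'a" where
  "prime_gen V = (SOME g. g \<in> carrier V \<and> g \<noteq> \<one>\<^bsub>V\<^esub>)"

lemma prime_order_group_cyclic:
  assumes "group V" "card (carrier V) = p" "Factorial_Ring.prime p"
  shows "prime_gen V \<in> carrier V" "prime_gen V [^]\<^bsub>V\<^esub> p = \<one>\<^bsub>V\<^esub>"
    "bij_betw (\<lambda>a. prime_gen V [^]\<^bsub>V\<^esub> a) {..<p} (carrier V)"
proof -
  interpret group V by fact
  let ?g = "prime_gen V"
  have p1: "1 < p" using assms(3) prime_gt_1_nat by blast
  have fin: "finite (carrier V)" using assms(2) p1 by (intro card_ge_0_finite) simp
  have "carrier V \<noteq> {\<one>\<^bsub>V\<^esub>}" using assms(2) p1 by auto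
  then have "\<exists>g. g \<in> carrier V \<and> g \<noteq> \<one>\<^bsub>V\<^esub>" using one_closed by blast
  then have g: "?g \<in> carrier V" "?g \<noteq> \<one>\<^bsub>V\<^esub>"
    unfolding prime_gen_def by (metis (mono_tags, lifting) someI_ex)+
  have "ord ?g dvd p" using ord_dvd_group_order[OF g(1)] assms(2) by (simp add: order_def)
  moreover have "ord ?g \<noteq> 1" using ord_eq_1[OF g(1)] g(2) by simp
  ultimately have ord: "ord ?g = p" using assms(3) by (auto simp: prime_nat_iff)
  have inj: "inj_on (\<lambda>a. ?g [^]\<^bsub>V\<^esub> a) {..<p}"
    using ord_inj[OF g(1)] ord p1 by (simp add: atLeast0AtMost lessThan_Suc_atMost[symmetric])
  have "(\<lambda>a. ?g [^]\<^bsub>V\<^esub> a) ` {..<p} \<subseteq> carrier V" using g(1) by auto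
  then have "(\<lambda>a. ?g [^]\<^bsub>V\<^esub> a) ` {..<p} = carrier V"
    using card_subset_eq[OF fin] card_image[OF inj] assms(2) by simp
  then show "bij_betw (\<lambda>a. ?g [^]\<^bsub>V\<^esub> a) {..<p} (carrier V)" using inj by (simp add: bij_betw_def)
  show "?g \<in> carrier V" by (rule g(1))
  show "?g [^]\<^bsub>V\<^esub> p = \<one>\<^bsub>V\<^esub>" using pow_ord_eq_1[OF g(1)] ord by simp
qed

text \<open>A group \<open>V\<close> of prime order \<open>p\<close> embeds as the \<open>v\<close>-th free factor of \<open>C_p * \<dots> * C_p\<close>:
  the map \<open>g^a \<mapsto> x_v^a\<close> (\<open>0 \<le> a < p\<close>, via the discrete logarithm) is a homomorphism.\<close>
definition factor_embedding :: "nat \<Rightarrow> nat \<Rightarrow> ('a, 'b) monoid_scheme \<Rightarrow> 'a \<Rightarrow> (nat \<times> nat) list" where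
  "factor_embedding p v V x = cp_cons v (the_inv_into {..<p} (\<lambda>a. prime_gen V [^]\<^bsub>V\<^esub> a) x) []"

lemma prime_order_factor_embedding:
  assumes "group V" "card (carrier V) = p" "Factorial_Ring.prime p" "v < n"
  shows "factor_embedding p v V \<in> hom V (Cp_free_prod p n)"
    and "\<And>a. 0 < a \<Longrightarrow> a < p \<Longrightarrow> factor_embedding p v V (prime_gen V [^]\<^bsub>V\<^esub> a) = [(v, a)]"
proof -
  interpret group V by fact
  let ?g = "prime_gen V"
  note g = prime_order_group_cyclic[OF assms(1-3)]
  have p0: "0 < p" using assms(3) prime_gt_0_nat by blast
  define dlog where "dlog = the_inv_into {..<p} (\<lambda>a. ?g [^]\<^bsub>V\<^esub> a)"
  have dlog_pow: "dlog (?g [^]\<^bsub>V\<^esub> a) = a" if "a < p" for a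
    using g(3) that unfolding dlog_def by (simp add: bij_betw_def the_inv_into_f_f)
  have dlog: "dlog x < p" "?g [^]\<^bsub>V\<^esub> dlog x = x" if "x \<in> carrier V" for x
    using the_inv_into_into[of _ "{..<p}" x "{..<p}"] f_the_inv_into_f[of _ "{..<p}" x] g(3) that
    unfolding dlog_def bij_betw_def by auto
  have dlog_mult: "dlog (x \<otimes>\<^bsub>V\<^esub> y) = (dlog x + dlog y) mod p"
    if "x \<in> carrier V" "y \<in> carrier V" for x y
  proof -
    have "x \<otimes>\<^bsub>V\<^esub> y = ?g [^]\<^bsub>V\<^esub> (dlog x + dlog y)"
      using dlog that g(1) by (metis nat_pow_mult)
    also have "\<dots> = ?g [^]\<^bsub>V\<^esub> ((dlog x + dlog y) mod p)"
      using nat_pow_mod_exponent[OF g(1,2)] .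
    finally show ?thesis using dlog_pow p0 by simp
  qed
  have emb: "factor_embedding p v V x = cp_cons v (dlog x) []" for x
    by (simp add: factor_embedding_def dlog_def)
  show "factor_embedding p v V \<in> hom V (Cp_free_prod p n)"
  proof (rule homI)
    fix x assume "x \<in> carrier V"
    then show "factor_embedding p v V x \<in> carrier (Cp_free_prod p n)"
      using dlog assms(4) cp_reduced_cons[of p n "[]" v]
      by (simp add: emb carrier_Cp_free_prod avoids_factor_def)
  next
    fix x y assume xy: "x \<in> carrier V" "y \<in> carrier V"
    have "foldr (cp_push p) (cp_cons v (dlog x) []) (cp_cons v (dlog y) []) =
          cp_cons v ((dlog x + dlog y) mod p) []"
      using dlog[OF xy(1)] dlog[OF xy(2)] cp_push_cons[of "dlog x" p "dlog y" v "[]"]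
      by (cases "dlog x = 0") (auto simp: cp_cons_def avoids_factor_def)
    then show "factor_embedding p v V (x \<otimes>\<^bsub>V\<^esub> y) =
        factor_embedding p v V x \<otimes>\<^bsub>Cp_free_prod p n\<^esub> factor_embedding p v V y"
      by (simp add: emb dlog_mult[OF xy] mult_Cp_free_prod)
  qed
  show "factor_embedding p v V (?g [^]\<^bsub>V\<^esub> a) = [(v, a)]" if "0 < a" "a < p" for a
    using that dlog_pow by (simp add: emb cp_cons_def)
qed

section \<open>Countable groups and the universal property of the fundamental group\<close>

text \<open>A finitely generated group is countable: every element is the value of a finite word in
  the generators and their inverses.\<close>
lemma word_eval_append:
  assumes "group G" "set ws \<subseteq> carrier G \<times> UNIV" "set vs \<subseteq> carrier G \<times> UNIV"
  shows "word_eval G (ws @ vs) = word_eval G ws \<otimes>\<^bsub>G\<^esub> word_eval G vs"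
proof -
  interpret group G by fact
  have closed: "word_eval G us \<in> carrier G" if "set us \<subseteq> carrier G \<times> UNIV" for us
    using that by (induction us) (auto simp: word_eval_def)
  show ?thesis
    using assms(2) closed[OF assms(3)]
  proof (induction ws)
    case (Cons w ws)
    then show ?case using closed[of ws] by (cases w) (auto simp: word_eval_def m_assoc)
  qed (simp add: word_eval_def)
qed

lemma generate_word_eval:
  assumes "group G" "S \<subseteq> carrier G"
  shows "generate G S \<subseteq> word_eval G ` lists (S \<times> UNIV)"
proof
  fix x assume "x \<in> generate G S"
  then show "x \<in> word_eval G ` lists (S \<times> UNIV)"
  proof (induction rule: generate.induct)
    case one
    show ?case by (rule image_eqI[of _ _ "[]"]) (simp_all add: word_eval_def)
  next
    case (incl h)
    then have "h = word_eval G [(h, True)]"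
      using assms by (auto simp: word_eval_def group.is_monoid monoid.r_one)
    then show ?case using incl by auto
  next
    case (inv h)
    then have "inv\<^bsub>G\<^esub> h = word_eval G [(h, False)]"
      using assms by (auto simp: word_eval_def group.is_monoid monoid.r_one group.inv_closed)
    then show ?case using inv by auto
  next
    case (eng h1 h2)
    then obtain w1 w2 where w: "w1 \<in> lists (S \<times> UNIV)" "w2 \<in> lists (S \<times> UNIV)"
      "h1 = word_eval G w1" "h2 = word_eval G w2" by blast
    moreover have "set w1 \<subseteq> carrier G \<times> UNIV" "set w2 \<subseteq> carrier G \<times> UNIV"
      using w assms(2) by (auto simp: in_lists_conv_set)
    ultimately have "h1 \<otimes>\<^bsub>G\<^esub> h2 = word_eval G (w1 @ w2)"
      using word_eval_append[OF assms(1)] by simp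
    then show ?case using w by auto
  qed
qed

lemma finitely_generated_countable:
  assumes "group G" "finitely_generated G"
  shows "countable (carrier G)"
proof -
  obtain S where S: "finite S" "S \<subseteq> carrier G" "generate G S = carrier G"
    using assms(2) unfolding finitely_generated_def by blast
  have "countable (lists (S \<times> (UNIV :: bool set)))"
    using S(1) by (simp add: countable_finite countable_lists)
  then show ?thesis
    using generate_word_eval[OF assms(1) S(2)] S(3) countable_subset by fastforce
qed

text \<open>The universal property of the fundamental group only quantifies over test groups
  carried by \<open>nat\<close>. Any countable group has an isomorphic copy carried by \<open>nat\<close>, obtained
  by transporting the structure along an injection.\<close>
definition nat_copy :: "('a, 'b) monoid_scheme \<Rightarrow> ('a \<Rightarrow> nat) \<Rightarrow> nat monoid" where
  "nat_copy G f = \<lparr>carrier = f ` carrier G,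
     monoid.mult = (\<lambda>x y. f (inv_into (carrier G) f x \<otimes>\<^bsub>G\<^esub> inv_into (carrier G) f y)),
     one = f (one G)\<rparr>"

lemma nat_copy_iso:
  assumes "group G" "inj_on f (carrier G)"
  shows "group (nat_copy G f)" and "f \<in> iso G (nat_copy G f)"
proof -
  interpret group G by fact
  have inv_f: "inv_into (carrier G) f (f x) = x" if "x \<in> carrier G" for x
    using assms(2) that by simp
  show "group (nat_copy G f)"
  proof (rule groupI)
    fix x assume "x \<in> carrier (nat_copy G f)"
    then obtain a where "a \<in> carrier G" "x = f a" by (auto simp: nat_copy_def)
    then show "\<exists>y\<in>carrier (nat_copy G f). y \<otimes>\<^bsub>nat_copy G f\<^esub> x = \<one>\<^bsub>nat_copy G f\<^esub>"
      by (auto simp: nat_copy_def inv_f intro!: bexI[of _ "inv\<^bsub>G\<^esub> a"])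
  qed (auto simp: nat_copy_def inv_f m_assoc)
  show "f \<in> iso G (nat_copy G f)"
    using assms(2) by (auto intro!: homI simp: iso_def bij_betw_def nat_copy_def inv_f)
qed

lemma countable_nat_copy:
  assumes "group G" "countable (carrier G)"
  obtains f where "group (nat_copy G f)" "f \<in> iso G (nat_copy G f)" "inj_on f (carrier G)"
  using assms(2) nat_copy_iso[OF assms(1)] by (meson countableE)

lemma cocone_compose:
  assumes "cocone k src tgt V E \<alpha> \<beta> T \<psi>" "h \<in> hom T T'"
  shows "cocone k src tgt V E \<alpha> \<beta> T' (\<lambda>v x. h (\<psi> v x))"
  using assms hom_compose[of _ _ T h T'] unfolding cocone_def by (auto simp: comp_def)

lemma fundamental_group_lift:
  assumes fund: "is_fundamental_group k src tgt V E \<alpha> \<beta> G \<phi>"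
    and T: "group T" "countable (carrier T)"
    and coc: "cocone k src tgt V E \<alpha> \<beta> T \<psi>"
  obtains h where "h \<in> hom G T" "\<And>v x. v < k \<Longrightarrow> x \<in> carrier (V v) \<Longrightarrow> h (\<phi> v x) = \<psi> v x"
proof -
  obtain f where f: "group (nat_copy T f)" "f \<in> iso T (nat_copy T f)" "inj_on f (carrier T)"
    using countable_nat_copy[OF T] .
  have "cocone k src tgt V E \<alpha> \<beta> (nat_copy T f) (\<lambda>v x. f (\<psi> v x))"
    using f(2) unfolding iso_def by (blast intro: cocone_compose[OF coc])
  then obtain K where K: "K \<in> hom G (nat_copy T f)"
    "\<forall>v<k. \<forall>x\<in>carrier (V v). K (\<phi> v x) = f (\<psi> v x)"
    using fund f(1) unfolding is_fundamental_group_def by blast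
  have "inv_into (carrier T) f \<in> hom (nat_copy T f) T"
    using group.iso_set_sym[OF T(1) f(2)] by (simp add: iso_def)
  then have "inv_into (carrier T) f \<circ> K \<in> hom G T" using K(1) by (rule hom_compose[rotated])
  moreover have "\<psi> v x \<in> carrier T" if "v < k" "x \<in> carrier (V v)" for v x
    using coc that by (auto simp: cocone_def hom_in_carrier)
  ultimately show ?thesis using that K(2) f(3) by simp
qed

lemma fundamental_group_endo_id:
  assumes fund: "is_fundamental_group k src tgt V E \<alpha> \<beta> G \<phi>"
    and G: "group G" "countable (carrier G)"
    and h: "h \<in> hom G G" "\<And>v x. v < k \<Longrightarrow> x \<in> carrier (V v) \<Longrightarrow> h (\<phi> v x) = \<phi> v x"
    and y: "y \<in> carrier G"
  shows "h y = y"
proof -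
  obtain f where f: "group (nat_copy G f)" "f \<in> iso G (nat_copy G f)" "inj_on f (carrier G)"
    using countable_nat_copy[OF G] .
  have fh: "f \<in> hom G (nat_copy G f)" using f(2) by (simp add: iso_def)
  have "cocone k src tgt V E \<alpha> \<beta> G \<phi>" using fund by (simp add: is_fundamental_group_def)
  then have coc: "cocone k src tgt V E \<alpha> \<beta> (nat_copy G f) (\<lambda>v x. f (\<phi> v x))"
    using cocone_compose fh by blast
  have "f \<circ> h \<in> hom G (nat_copy G f)" using hom_compose[OF h(1) fh] .
  moreover have "\<forall>v<k. \<forall>x\<in>carrier (V v). (f \<circ> h) (\<phi> v x) = f (\<phi> v x)"
    using h(2) by simp
  ultimately have "(f \<circ> h) y = f y"
    using fund f(1) coc fh y unfolding is_fundamental_group_def by blast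
  then show ?thesis using f(3) y hom_in_carrier[OF h(1) y] by (simp add: inj_on_eq_iff)
qed

text \<open>With trivial edge groups the compatibility conditions are vacuous, so any family of
  homomorphisms out of the vertex groups is a cocone.\<close>
lemma cocone_trivial_edges:
  assumes gog: "graph_of_groups k src tgt V E \<alpha> \<beta>"
    and triv: "\<And>e. e < k - 1 \<Longrightarrow> card (carrier (E e)) = 1"
    and T: "group T" and \<psi>: "\<And>v. v < k \<Longrightarrow> \<psi> v \<in> hom (V v) T"
  shows "cocone k src tgt V E \<alpha> \<beta> T \<psi>"
  unfolding cocone_def
proof (intro conjI allI impI ballI)
  fix e x assume e: "e < k - 1" and x: "x \<in> carrier (E e)"
  have grp: "group (E e)" "group (V (src e))" "group (V (tgt e))" "src e < k" "tgt e < k"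
    and hom: "\<alpha> e \<in> hom (E e) (V (src e))" "\<beta> e \<in> hom (E e) (V (tgt e))"
    using gog e by (auto simp: graph_of_groups_def tree_graph_def)
  have "x = \<one>\<^bsub>E e\<^esub>"
    using triv[OF e] x group.is_monoid[OF grp(1)] by (metis card_1_singletonE monoid.one_closed singletonD)
  then show "\<psi> (src e) (\<alpha> e x) = \<psi> (tgt e) (\<beta> e x)"
    using hom_one hom \<psi> grp T by metis
qed (use \<psi> in blast)

section \<open>Weighted trees\<close>

definition edge_rel :: "(nat \<Rightarrow> nat) \<Rightarrow> (nat \<Rightarrow> nat) \<Rightarrow> nat set \<Rightarrow> (nat \<times> nat) set" where
  "edge_rel src tgt Es = {(src e, tgt e) | e. e \<in> Es} \<union> {(tgt e, src e) | e. e \<in> Es}"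

definition finite_tree :: "nat set \<Rightarrow> nat set \<Rightarrow> (nat \<Rightarrow> nat) \<Rightarrow> (nat \<Rightarrow> nat) \<Rightarrow> bool" where
  "finite_tree Vs Es src tgt \<longleftrightarrow> finite Vs \<and> finite Es \<and> card Es + 1 = card Vs \<and>
     (\<forall>e\<in>Es. src e \<in> Vs \<and> tgt e \<in> Vs \<and> src e \<noteq> tgt e) \<and>
     (\<forall>u\<in>Vs. \<forall>w\<in>Vs. (u, w) \<in> (edge_rel src tgt Es)\<^sup>*)"

lemma sym_edge_rel_rtrancl: "sym ((edge_rel src tgt Es)\<^sup>*)"
  by (rule sym_rtrancl) (auto simp: sym_def edge_rel_def)

lemma tree_graph_finite_tree:
  assumes "tree_graph k src tgt"
  shows "finite_tree {..<k} {..<k - 1} src tgt"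
proof -
  have k: "1 \<le> k" and conn: "\<forall>v<k. (0, v) \<in> (edge_rel src tgt {..<k - 1})\<^sup>*"
    using assms by (auto simp: tree_graph_def edge_rel_def)
  have "(u, w) \<in> (edge_rel src tgt {..<k - 1})\<^sup>*" if "u < k" "w < k" for u w
    using conn that sym_edge_rel_rtrancl by (meson rtrancl_trans symD)
  then show ?thesis using assms k by (auto simp: finite_tree_def tree_graph_def)
qed

text \<open>Degree counting: since the degrees sum to \<open>2 |E| < 2 |V|\<close>, some vertex has degree at
  most one.\<close>
lemma low_degree_vertex:
  assumes fin: "finite Vs" "finite Es" and card: "card Es + 1 = card Vs"
    and ends: "\<forall>e\<in>Es. src e \<in> Vs \<and> tgt e \<in> Vs"
  shows "\<exists>v\<in>Vs. card {e\<in>Es. src e = v \<or> tgt e = v} \<le> 1"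
proof (rule ccontr)
  assume "\<not> ?thesis"
  then have deg: "2 \<le> card {e\<in>Es. src e = v} + card {e\<in>Es. tgt e = v}" if "v \<in> Vs" for v
    using that card_Un_le[of "{e\<in>Es. src e = v}" "{e\<in>Es. tgt e = v}"]
    by (auto simp: Collect_disj_eq[symmetric] conj_disj_distribL)
  have sum_deg: "(\<Sum>v\<in>Vs. card {e\<in>Es. f e = v}) = card Es" if "\<forall>e\<in>Es. f e \<in> Vs" for f
    using sum.group[OF fin(2,1), of f "\<lambda>_. 1::nat"] that by auto
  have "2 * card Vs \<le> (\<Sum>v\<in>Vs. card {e\<in>Es. src e = v} + card {e\<in>Es. tgt e = v})"
    using sum_mono[of Vs "\<lambda>_. 2" "\<lambda>v. card {e\<in>Es. src e = v} + card {e\<in>Es. tgt e = v}"] deg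
    by (simp add: mult.commute)
  also have "\<dots> = 2 * card Es"
    using sum_deg[of src] sum_deg[of tgt] ends by (simp add: sum.distrib)
  finally show False using card by simp
qed

lemma finite_tree_leaf:
  assumes tree: "finite_tree Vs Es src tgt" and ne: "Es \<noteq> {}"
  obtains v e where "v \<in> Vs" "{e\<in>Es. src e = v \<or> tgt e = v} = {e}"
proof -
  have fin: "finite Vs" "finite Es" and card: "card Es + 1 = card Vs"
    and ends: "\<forall>e\<in>Es. src e \<in> Vs \<and> tgt e \<in> Vs"
    and conn: "\<forall>u\<in>Vs. \<forall>w\<in>Vs. (u, w) \<in> (edge_rel src tgt Es)\<^sup>*"
    using tree by (simp_all add: finite_tree_def)
  obtain v where v: "v \<in> Vs" "card {e\<in>Es. src e = v \<or> tgt e = v} \<le> 1"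
    using low_degree_vertex[OF fin card ends] by blast
  let ?I = "{e\<in>Es. src e = v \<or> tgt e = v}"
  have "card (Vs - {v}) = card Es" using fin card v(1) by (simp add: card_Diff_singleton)
  then have "card (Vs - {v}) \<noteq> 0" using fin ne by simp
  then obtain u where u: "u \<in> Vs" "u \<noteq> v" by (metis Diff_iff all_not_in_conv card.empty singletonI)
  have "(v, u) \<in> (edge_rel src tgt Es)\<^sup>*" using conn u(1) v(1) by blast
  then obtain y where "(v, y) \<in> edge_rel src tgt Es"
    using u(2) by (cases rule: converse_rtranclE) auto
  then have "?I \<noteq> {}" by (auto simp: edge_rel_def)
  moreover have "finite ?I" using fin by simp
  ultimately have "card ?I \<noteq> 0" by simp
  then have "card ?I = 1" using v(2) by linarith
  then obtain e where "?I = {e}" by (rule card_1_singletonE)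
  then show ?thesis using that v(1) by blast
qed

text \<open>Paths from a leaf \<open>v\<close> leave it through its unique edge \<open>e\<close> towards \<open>w\<close>; so every vertex
  other than \<open>v\<close> reachable from \<open>v\<close> is reachable from \<open>w\<close> without using \<open>e\<close>.\<close>
lemma leaf_reach:
  assumes ends: "{src e, tgt e} = {v, w}"
    and other: "\<forall>f\<in>Es - {e}. src f \<noteq> v \<and> tgt f \<noteq> v"
    and path: "(v, u) \<in> (edge_rel src tgt Es)\<^sup>*"
  shows "u = v \<or> (w, u) \<in> (edge_rel src tgt (Es - {e}))\<^sup>*"
  using path
proof (induction rule: rtrancl_induct)
  case (step y z)
  then obtain f where f: "f \<in> Es" "{y, z} = {src f, tgt f}" by (auto simp: edge_rel_def)
  show ?case
  proof (cases "f = e")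
    case True
    then show ?thesis using f ends by auto
  next
    case False
    then have "y \<noteq> v" "(y, z) \<in> edge_rel src tgt (Es - {e})"
      using other f by (auto simp: edge_rel_def doubleton_eq_iff)
    then show ?thesis using step.IH by (meson rtrancl.rtrancl_into_rtrancl)
  qed
qed simp

lemma finite_tree_remove_leaf:
  assumes tree: "finite_tree Vs Es src tgt" and ne: "Es \<noteq> {}"
  obtains v e w where "v \<in> Vs" "e \<in> Es" "w \<in> Vs - {v}" "{src e, tgt e} = {v, w}"
    "finite_tree (Vs - {v}) (Es - {e}) src tgt"
proof -
  have fin: "finite Vs" "finite Es" and card: "card Es + 1 = card Vs"
    and ends: "\<forall>e\<in>Es. src e \<in> Vs \<and> tgt e \<in> Vs \<and> src e \<noteq> tgt e"
    and conn: "\<forall>u\<in>Vs. \<forall>w\<in>Vs. (u, w) \<in> (edge_rel src tgt Es)\<^sup>*"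
    using tree by (simp_all add: finite_tree_def)
  obtain v e where v: "v \<in> Vs" and I: "{e\<in>Es. src e = v \<or> tgt e = v} = {e}"
    using finite_tree_leaf[OF tree ne] .
  define w where "w = (if src e = v then tgt e else src e)"
  have "e \<in> Es" "src e = v \<or> tgt e = v" using I by auto
  then have e: "e \<in> Es" "{src e, tgt e} = {v, w}" "w \<in> Vs - {v}"
    using ends by (auto simp: w_def)
  have other: "\<forall>f\<in>Es - {e}. src f \<noteq> v \<and> tgt f \<noteq> v" using I by blast
  let ?R' = "edge_rel src tgt (Es - {e})"
  have "(x, y) \<in> ?R'\<^sup>*" if "x \<in> Vs - {v}" "y \<in> Vs - {v}" for x y
  proof -
    have "(w, x) \<in> ?R'\<^sup>*" "(w, y) \<in> ?R'\<^sup>*"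
      using leaf_reach[OF e(2) other] conn v(1) that by auto
    then show ?thesis using sym_edge_rel_rtrancl by (meson rtrancl_trans symD)
  qed
  moreover have "card (Es - {e}) + 1 = card (Vs - {v})"
    using fin card e(1) v(1) card_Diff1_less[OF fin(2) e(1)] by simp
  ultimately have "finite_tree (Vs - {v}) (Es - {e}) src tgt"
    using fin ends other unfolding finite_tree_def by blast
  then show ?thesis using that v(1) e by blast
qed

text \<open>Weights \<open>a\<close> on vertices and \<open>b\<close> on
  edges with every edge weight strictly below both endpoint weights satisfy
  \<open>\<Sum>b + |V| \<le> \<Sum>a\<close>, with equality only if all vertex weights are \<open>1\<close> and all edge
  weights are \<open>0\<close>. (For a single vertex, \<open>a \<ge> 1\<close> has to be assumed.) Proof: remove a leaf.\<close>
lemma finite_tree_weight_bound: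
  assumes "finite_tree Vs Es src tgt"
    and "Es = {} \<Longrightarrow> \<forall>v\<in>Vs. 1 \<le> (a :: nat \<Rightarrow> nat) v"
    and "\<forall>e\<in>Es. (b :: nat \<Rightarrow> nat) e < a (src e) \<and> b e < a (tgt e)"
  shows "sum b Es + card Vs \<le> sum a Vs \<and>
         (sum a Vs = sum b Es + card Vs \<longrightarrow> (\<forall>v\<in>Vs. a v = 1) \<and> (\<forall>e\<in>Es. b e = 0))"
  using assms
proof (induction "card Es" arbitrary: Vs Es)
  case 0
  then have "Es = {}" and card: "card Vs = 1" by (auto simp: finite_tree_def)
  obtain r where "Vs = {r}" using card by (rule card_1_singletonE)
  then show ?case using 0 \<open>Es = {}\<close> by auto
next
  case (Suc m)
  have fin: "finite Vs" "finite Es" using Suc.prems(1) by (auto simp: finite_tree_def)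
  have "Es \<noteq> {}" using Suc.hyps(2) by auto
  then obtain v e w where v: "v \<in> Vs" and e: "e \<in> Es" and w: "w \<in> Vs - {v}"
    and ends: "{src e, tgt e} = {v, w}" and tree': "finite_tree (Vs - {v}) (Es - {e}) src tgt"
    by (rule finite_tree_remove_leaf[OF Suc.prems(1)])
  have "b e < a (src e)" "b e < a (tgt e)" using Suc.prems(3) e by auto
  then have bnd: "b e < a v" "b e < a w" using ends by (auto simp: doubleton_eq_iff)
  have single: "\<forall>x\<in>Vs - {v}. 1 \<le> a x" if "Es - {e} = {}"
  proof -
    have "card (Vs - {v}) = 1" using tree' that by (simp add: finite_tree_def)
    then obtain x where "Vs - {v} = {x}" by (rule card_1_singletonE)
    then have "Vs - {v} = {w}" using w by simp
    then show ?thesis using bnd by simp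
  qed
  have m: "m = card (Es - {e})" using Suc.hyps(2) e fin by simp
  have weights': "\<forall>f\<in>Es - {e}. b f < a (src f) \<and> b f < a (tgt f)" using Suc.prems(3) by blast
  note IH = Suc.hyps(1)[OF m tree' single weights']
  have sa: "sum a Vs = a v + sum a (Vs - {v})" using sum.remove[OF fin(1) v] .
  have sb: "sum b Es = b e + sum b (Es - {e})" using sum.remove[OF fin(2) e] .
  have cv: "card Vs = Suc (card (Vs - {v}))" using card_Suc_Diff1[OF fin(1) v] by simp
  have "sum b Es + card Vs \<le> sum a Vs" using conjunct1[OF IH] sa sb cv bnd by linarith
  moreover have "(\<forall>x\<in>Vs. a x = 1) \<and> (\<forall>f\<in>Es. b f = 0)" if "sum a Vs = sum b Es + card Vs"
  proof -
    have "sum a (Vs - {v}) = sum b (Es - {e}) + card (Vs - {v})" and av: "a v = b e + 1"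
      using that conjunct1[OF IH] sa sb cv bnd by linarith+
    then have rest: "\<forall>x\<in>Vs - {v}. a x = 1" "\<forall>f\<in>Es - {e}. b f = 0" using IH by blast+
    then have "b e = 0" "a v = 1" using w bnd av by auto
    then show ?thesis using rest by blast
  qed
  ultimately show ?case by blast
qed

section \<open>Counting orders in a tree of elementary abelian \<open>p\<close>-groups\<close>

lemma card_elementary_abelian:
  assumes "0 < p" "V \<cong> product_group {..<m} (\<lambda>_. integer_mod_group p)"
  shows "card (carrier V) = p ^ m"
  using iso_same_card[OF assms(2)] assms(1) by (simp add: carrier_integer_mod_group card_PiE)

text \<open>By Lagrange, a proper subgroup (given as an injective image) of a group of order \<open>p^a\<close>
  has order \<open>p^i\<close> with \<open>i < a\<close>.\<close>
lemma proper_subgroup_prime_power_order: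
  assumes p: "Factorial_Ring.prime p" and V: "group V" "card (carrier V) = p ^ a"
    and h: "group H" "h \<in> hom H V" "inj_on h (carrier H)" "h ` carrier H \<noteq> carrier V"
  obtains i where "i < a" "card (carrier H) = p ^ i"
proof -
  interpret group_hom H V h using V h by (simp add: group_hom_def group_hom_axioms_def)
  have p1: "1 < p" using p prime_gt_1_nat by blast
  have fin: "finite (carrier V)" using V(2) p1 by (intro card_ge_0_finite) simp
  have sub: "subgroup (h ` carrier H) V" by (rule img_is_subgroup)
  have "card (h ` carrier H) dvd p ^ a"
    using group.lagrange[OF V(1) sub] V(2) by (metis dvd_triv_right order_def)
  then obtain i where i: "i \<le> a" "card (h ` carrier H) = p ^ i"
    using divides_primepow_nat[OF p] by blast
  have "card (h ` carrier H) < card (carrier V)"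
    using psubset_card_mono[OF fin] subgroup.subset[OF sub] h(4) by blast
  then have "i < a" using i V(2) p1 by (simp add: power_strict_increasing_iff)
  then show ?thesis using that i card_image[OF h(3)] by simp
qed

lemma tree_of_elementary_groups_exponents:
  fixes V E :: "nat \<Rightarrow> 'b monoid"
  assumes p: "Factorial_Ring.prime p"
    and gog: "graph_of_groups k src tgt V E \<alpha> \<beta>"
    and vert: "\<forall>v < k. \<exists>m::nat. V v \<cong> product_group {..<m} (\<lambda>_. integer_mod_group p)"
    and proper: "\<forall>e < k - 1. \<alpha> e ` carrier (E e) \<noteq> carrier (V (src e)) \<and>
                     \<beta> e ` carrier (E e) \<noteq> carrier (V (tgt e))"
  obtains a b where "\<And>v. v < k \<Longrightarrow> card (carrier (V v)) = p ^ a v"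
    "\<And>e. e < k - 1 \<Longrightarrow> card (carrier (E e)) = p ^ b e"
    "\<And>e. e < k - 1 \<Longrightarrow> b e < a (src e) \<and> b e < a (tgt e)"
proof -
  have exp: "multiplicity p (p ^ m) = m" for m
    using p by (simp add: multiplicity_same_power prime_gt_0_nat)
  define a where "a v = multiplicity p (card (carrier (V v)))" for v
  define b where "b e = multiplicity p (card (carrier (E e)))" for e
  have a: "card (carrier (V v)) = p ^ a v" if v: "v < k" for v
  proof -
    obtain m :: nat where "V v \<cong> product_group {..<m} (\<lambda>_. integer_mod_group p)"
      using vert[rule_format, OF v] ..
    then have "card (carrier (V v)) = p ^ m"
      by (rule card_elementary_abelian[rotated]) (use p prime_gt_0_nat in simp)
    then show ?thesis by (simp add: a_def exp)
  qed
  have edge: "src e < k" "tgt e < k" "group (E e)" "group (V (src e))" "group (V (tgt e))"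
    "\<alpha> e \<in> hom (E e) (V (src e))" "inj_on (\<alpha> e) (carrier (E e))"
    "\<beta> e \<in> hom (E e) (V (tgt e))" "inj_on (\<beta> e) (carrier (E e))" if "e < k - 1" for e
    using gog that by (auto simp: graph_of_groups_def tree_graph_def)
  have b: "card (carrier (E e)) = p ^ b e" "b e < a (src e) \<and> b e < a (tgt e)"
    if e: "e < k - 1" for e
  proof -
    obtain i where i: "i < a (src e)" "card (carrier (E e)) = p ^ i"
      using proper_subgroup_prime_power_order[OF p edge(4)[OF e] a[OF edge(1)[OF e]]
          edge(3,6,7)[OF e]] proper e by blast
    obtain j where j: "j < a (tgt e)" "card (carrier (E e)) = p ^ j"
      using proper_subgroup_prime_power_order[OF p edge(5)[OF e] a[OF edge(2)[OF e]]
          edge(3,8,9)[OF e]] proper e by blast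
    have "b e = i" using i(2) by (simp add: b_def exp)
    moreover have "b e = j" using j(2) by (simp add: b_def exp)
    ultimately show "card (carrier (E e)) = p ^ b e" "b e < a (src e) \<and> b e < a (tgt e)"
      using i j by simp_all
  qed
  show ?thesis using that a b by blast
qed

lemma prime_power_quotient_exponents:
  assumes "1 < p" "finite A" "finite B"
    and "(\<Prod>v\<in>A. real (p ^ a v)) / (\<Prod>e\<in>B. real (p ^ b e)) = real p ^ n"
  shows "sum a A = n + sum b B"
proof -
  have "real p ^ sum a A = real p ^ n * real p ^ sum b B"
    using assms by (simp add: power_sum divide_eq_eq)
  then show ?thesis using assms(1) by (simp add: power_add[symmetric] power_inject_exp)
qed

text \<open>Since \<open>\<Sum>a - \<Sum>b = n\<close>, the tree inequality gives \<open>k \<le> n\<close>, so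
  \<open>k \<ge> n\<close> forces equality: all vertex groups have order \<open>p\<close>, all edge groups are trivial.\<close>
lemma tree_of_elementary_groups_count:
  fixes V E :: "nat \<Rightarrow> 'b monoid"
  assumes p: "Factorial_Ring.prime p" and n: "n \<ge> 1"
    and gog: "graph_of_groups k src tgt V E \<alpha> \<beta>"
    and vert: "\<forall>v < k. \<exists>m::nat. V v \<cong> product_group {..<m} (\<lambda>_. integer_mod_group p)"
    and proper: "\<forall>e < k - 1. \<alpha> e ` carrier (E e) \<noteq> carrier (V (src e)) \<and>
                     \<beta> e ` carrier (E e) \<noteq> carrier (V (tgt e))"
    and orders: "(\<Prod>v<k. real (card (carrier (V v)))) / (\<Prod>e<k - 1. real (card (carrier (E e))))
                  = real p ^ n"
    and kn: "k \<ge> n"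
  shows "k = n" "\<And>v. v < k \<Longrightarrow> card (carrier (V v)) = p"
    "\<And>e. e < k - 1 \<Longrightarrow> card (carrier (E e)) = 1"
proof -
  obtain a b where a: "\<And>v. v < k \<Longrightarrow> card (carrier (V v)) = p ^ a v"
    and b: "\<And>e. e < k - 1 \<Longrightarrow> card (carrier (E e)) = p ^ b e"
    and b_less: "\<And>e. e < k - 1 \<Longrightarrow> b e < a (src e) \<and> b e < a (tgt e)"
    using tree_of_elementary_groups_exponents[OF p gog vert proper] by blast
  have "(\<Prod>v<k. real (p ^ a v)) / (\<Prod>e<k - 1. real (p ^ b e)) = real p ^ n"
    using orders a b by simp
  then have sums: "(\<Sum>v<k. a v) = n + (\<Sum>e<k - 1. b e)"
    using prime_power_quotient_exponents p prime_gt_1_nat by blast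
  have tree: "finite_tree {..<k} {..<k - 1} src tgt"
    using gog tree_graph_finite_tree by (simp add: graph_of_groups_def)
  have "1 \<le> k" using gog by (simp add: graph_of_groups_def tree_graph_def)
  then have single: "\<forall>v\<in>{..<k}. 1 \<le> a v" if "{..<k - 1} = {}"
    using that sums n by (simp add: lessThan_empty_iff le_antisym)
  have "\<forall>e\<in>{..<k - 1}. b e < a (src e) \<and> b e < a (tgt e)" using b_less by blast
  note bound = finite_tree_weight_bound[OF tree single this]
  have "sum b {..<k - 1} + k \<le> sum a {..<k}" using conjunct1[OF bound] by simp
  then show k: "k = n" using sums kn by linarith
  have "sum a {..<k} = sum b {..<k - 1} + card {..<k}" using sums k by simp
  then have ones: "\<forall>v\<in>{..<k}. a v = 1" and zeros: "\<forall>e\<in>{..<k - 1}. b e = 0"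
    using conjunct2[OF bound] by blast+
  show "card (carrier (V v)) = p" if "v < k" for v using a ones that by simp
  show "card (carrier (E e)) = 1" if "e < k - 1" for e using b zeros that by simp
qed

section \<open>Recognising the free product\<close>

lemma free_factors_eval:
  assumes p: "Factorial_Ring.prime p" and G: "group G"
    and V: "\<And>v. v < k \<Longrightarrow> group (V v)" and vert: "\<And>v. v < k \<Longrightarrow> card (carrier (V v)) = p"
    and \<phi>: "\<And>v. v < k \<Longrightarrow> \<phi> v \<in> hom (V v) G"
  defines "H \<equiv> cp_eval G (\<lambda>v. \<phi> v (prime_gen (V v)))"
  shows "H \<in> hom (Cp_free_prod p k) G"
    and "\<And>v a. v < k \<Longrightarrow> H [(v, a)] = \<phi> v (prime_gen (V v) [^]\<^bsub>V v\<^esub> a)"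
    and "\<And>v x. v < k \<Longrightarrow> x \<in> carrier (V v) \<Longrightarrow> H (factor_embedding p v (V v) x) = \<phi> v x"
proof -
  let ?P = "Cp_free_prod p k" and ?g = "\<lambda>v. prime_gen (V v)"
  have cyc: "?g v \<in> carrier (V v)" "?g v [^]\<^bsub>V v\<^esub> p = \<one>\<^bsub>V v\<^esub>"
    "bij_betw (\<lambda>a. ?g v [^]\<^bsub>V v\<^esub> a) {..<p} (carrier (V v))" if "v < k" for v
    using prime_order_group_cyclic[OF V[OF that] vert[OF that] p] by simp_all
  have emb: "factor_embedding p v (V v) \<in> hom (V v) ?P"
    "\<And>a. 0 < a \<Longrightarrow> a < p \<Longrightarrow> factor_embedding p v (V v) (?g v [^]\<^bsub>V v\<^esub> a) = [(v, a)]"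
    if "v < k" for v
    using prime_order_factor_embedding[OF V[OF that] vert[OF that] p that] by simp_all
  have P: "group ?P" using group_Cp_free_prod p prime_gt_1_nat by blast
  have gen: "\<phi> v (?g v) \<in> carrier G" "\<phi> v (?g v) [^]\<^bsub>G\<^esub> p = \<one>\<^bsub>G\<^esub>" if v: "v < k" for v
  proof -
    show "\<phi> v (?g v) \<in> carrier G" using hom_in_carrier[OF \<phi>[OF v] cyc(1)[OF v]] .
    have "\<phi> v (?g v) [^]\<^bsub>G\<^esub> p = \<phi> v (?g v [^]\<^bsub>V v\<^esub> p)"
      using hom_nat_pow[OF \<phi>[OF v] cyc(1)[OF v] V[OF v] G] by simp
    then show "\<phi> v (?g v) [^]\<^bsub>G\<^esub> p = \<one>\<^bsub>G\<^esub>" using cyc(2)[OF v] hom_one[OF \<phi>[OF v] V[OF v] G] by simp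
  qed
  interpret H: cp_evaluation G p k "\<lambda>v. \<phi> v (?g v)"
    by (intro cp_evaluation.intro cp_evaluation_axioms.intro G gen)
  show H: "H \<in> hom ?P G" unfolding H_def by (rule H.cp_eval_hom)
  show H_letter: "H [(v, a)] = \<phi> v (?g v [^]\<^bsub>V v\<^esub> a)" if "v < k" for v a
    using H.cp_eval_letter that cyc(1) hom_nat_pow[OF \<phi> _ V G] by (simp add: H_def)
  show "H (factor_embedding p v (V v) x) = \<phi> v x" if v: "v < k" and x: "x \<in> carrier (V v)" for v x
  proof -
    obtain a where a: "a < p" "x = ?g v [^]\<^bsub>V v\<^esub> a"
      using cyc(3)[OF v] x by (auto simp: bij_betw_def)
    show ?thesis
    proof (cases "a = 0")
      case True
      then have "factor_embedding p v (V v) x = \<one>\<^bsub>?P\<^esub>" "x = \<one>\<^bsub>V v\<^esub>"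
        using a hom_one[OF emb(1)[OF v] V[OF v] P] by simp_all
      then show ?thesis using hom_one[OF H P G] hom_one[OF \<phi>[OF v] V[OF v] G] by simp
    qed (use a emb(2)[OF v] H_letter[OF v] in simp)
  qed
qed

text \<open>The universal property gives \<open>D\<close> inverse to the map \<open>H\<close> of
  the previous lemma: \<open>D \<circ> H\<close> fixes all letters and \<open>H \<circ> D\<close> fixes all vertex groups.\<close>
lemma tree_of_prime_order_groups_free_product:
  fixes V E :: "nat \<Rightarrow> 'b monoid"
  assumes p: "Factorial_Ring.prime p"
    and gog: "graph_of_groups k src tgt V E \<alpha> \<beta>"
    and fund: "is_fundamental_group k src tgt V E \<alpha> \<beta> G \<phi>"
    and G: "group G" "countable (carrier G)"
    and vert: "\<And>v. v < k \<Longrightarrow> card (carrier (V v)) = p"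
    and edges: "\<And>e. e < k - 1 \<Longrightarrow> card (carrier (E e)) = 1"
  shows "G \<cong> Cp_free_prod p k"
proof -
  let ?P = "Cp_free_prod p k"
  define \<rho> where "\<rho> v = factor_embedding p v (V v)" for v
  define H where "H = cp_eval G (\<lambda>v. \<phi> v (prime_gen (V v)))"
  have p1: "1 < p" using p prime_gt_1_nat by blast
  have P: "group ?P" using group_Cp_free_prod[OF p1] .
  have V: "group (V v)" if "v < k" for v using gog that by (simp add: graph_of_groups_def)
  have \<phi>: "\<phi> v \<in> hom (V v) G" if "v < k" for v
    using fund that by (simp add: is_fundamental_group_def cocone_def)
  note H = free_factors_eval[where k = k and V = V and \<phi> = \<phi>, OF p G(1) V vert \<phi>,
      folded H_def \<rho>_def]
  have emb: "\<rho> v \<in> hom (V v) ?P"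
    "\<And>a. 0 < a \<Longrightarrow> a < p \<Longrightarrow> \<rho> v (prime_gen (V v) [^]\<^bsub>V v\<^esub> a) = [(v, a)]"
    if "v < k" for v
    using prime_order_factor_embedding[OF V[OF that] vert[OF that] p that] by (simp_all add: \<rho>_def)
  have gen: "prime_gen (V v) \<in> carrier (V v)" if "v < k" for v
    using prime_order_group_cyclic(1)[OF V[OF that] vert[OF that] p] .
  have "countable (carrier ?P)" by (rule countableI_type)
  moreover have "cocone k src tgt V E \<alpha> \<beta> ?P \<rho>"
    using cocone_trivial_edges[OF gog edges P] emb(1) by blast
  ultimately obtain D where D: "D \<in> hom G ?P"
    and D_\<phi>: "\<And>v x. v < k \<Longrightarrow> x \<in> carrier (V v) \<Longrightarrow> D (\<phi> v x) = \<rho> v x"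
    using fundamental_group_lift[OF fund P] by blast
  have HD: "H (D y) = y" if "y \<in> carrier G" for y
    using fundamental_group_endo_id[OF fund G hom_compose[OF D H(1)]] D_\<phi> H(3) that by simp
  have DH: "D (H w) = w" if "w \<in> carrier ?P" for w
  proof -
    have "(D \<circ> H) [(v, a)] = id [(v, a)]" if "v < k" "0 < a" "a < p" for v a
      using that H(2) D_\<phi> emb(2) gen V by (simp add: monoid.nat_pow_closed group.is_monoid)
    then show ?thesis
      using Cp_free_prod_hom_ext[OF hom_compose[OF H(1) D] _ P p1] id_iso[of ?P] that
      by (simp add: iso_def)
  qed
  have "bij_betw D (carrier G) (carrier ?P)"
    by (rule bij_betw_byWitness[of _ H]) (use HD DH hom_in_carrier D H(1) in auto)
  then show ?thesis using D by (auto simp: is_iso_def iso_def)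
qed

theorem mainTheorem8:
  fixes p n k :: nat
    and G :: "'a monoid"
    and V E :: "nat \<Rightarrow> 'b monoid"
    and src tgt :: "nat \<Rightarrow> nat"
    and \<alpha> \<beta> :: "nat \<Rightarrow> 'b \<Rightarrow> 'b"
  assumes "Factorial_Ring.prime p" and "odd p" and "n \<ge> 1"
    and "group G" and "finitely_generated G" and "virtually_free G" and "para_Cp_free p n G"
    and "graph_of_groups k src tgt V E \<alpha> \<beta>"
    and "\<exists>\<phi>. is_fundamental_group k src tgt V E \<alpha> \<beta> G \<phi>"
    and "\<forall>v < k. \<exists>m::nat. V v \<cong> product_group {..<m} (\<lambda>_. integer_mod_group p)"
    and "\<forall>e < k - 1. \<alpha> e ` carrier (E e) \<noteq> carrier (V (src e)) \<and>
                     \<beta> e ` carrier (E e) \<noteq> carrier (V (tgt e))"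
    and "(\<Prod>v<k. real (card (carrier (V v)))) / (\<Prod>e<k - 1. real (card (carrier (E e)))) = real p ^ n"
    and "k \<ge> n"
  shows "k = n \<and> G \<cong> Cp_free_prod p n"
proof -
  note count = tree_of_elementary_groups_count[OF assms(1,3,8,10-13)]
  obtain \<phi> where fund: "is_fundamental_group k src tgt V E \<alpha> \<beta> G \<phi>" using assms(9) by blast
  have "countable (carrier G)" using finitely_generated_countable[OF assms(4,5)] .
  then have "G \<cong> Cp_free_prod p k"
    using tree_of_prime_order_groups_free_product[OF assms(1,8) fund assms(4)] count(2,3) by blast
  then show ?thesis using count(1) by simp
qed

end
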